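(* Let $(\Omega,\Sigma,P)$ be an atomless probability space with a filtration $\mathcal{F}=\{\mathcal{F}_n\}_{n\ge 0}$ such that each $\mathcal{F}_n$ is generated by an at most countable family $\mathcal{A}(\mathcal{F}_n)$ of atoms and $\bigcup_n\mathcal{F}_n$ generates $\Sigma$. Let $\alpha\in(0,1)$, $1<p<q<\infty$, $\frac1p-\frac1q=\alpha$. Define $$b_n=\sum_{w\in\mathcal{A}(\mathcal{F}_n)}P(w)\chi_w,\qquad \tilde b_n(x)=\inf\{b_n(y): y\in\omega\}\ \text{ for } x\in\omega\in\mathcal{A}(\mathcal{F}_{n-1}),$$ and for a random variable $F$ with martingale $F_n=\mathbb{E}(F\mid\mathcal{F}_n)$ and differences $\Delta F_n=F_n-F_{n-1}$ ($n\ge1$) put $$\tilde{I}_\alpha[F]=\sum_{n=1}^\infty \tilde b_n^{\alpha}\,\Delta F_n,\qquad I^{\mathcal{A}}_\alpha[F]=\sum_{n=1}^\infty b_n^{\alpha}\,\Delta F_n.$$ Then both operators $\tilde I_\alpha$ and $I^{\mathcal{A}}_\alpha$ map $L_p$ to $L_q$ continuously: there is a constant $C$ (independent of $F$) such that $\|\tilde I_\alpha[F]\|_{L_q}\le C\|F\|_{L_p}$ and $\|I^{\mathcal{A}}_\alpha[F]\|_{L_q}\le C\|F\|_{L_p}$ for all $F\in L_p$.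
   Context: A simple function is a random variable that is $\mathcal{F}_N$-measurable for some $N$; for such $F$ the sums above are finite. The operators are considered as linear maps between function spaces: the inequality is established for simple functions and the operators are extended to $L_p$ by density (equivalently, the series converge almost surely for $F\in L_p$ and the bounds hold). *)

theory Defs
  imports "HOL-Probability.Probability"
begin

definition is_atom :: "'a measure \<Rightarrow> 'a measure \<Rightarrow> 'a set \<Rightarrow> bool" where
  "is_atom M G B \<longleftrightarrow> B \<in> sets G \<and> measure M B > 0 \<and>
     (\<forall>C\<in>sets G. C \<subseteq> B \<longrightarrow> measure M C = 0 \<or> measure M C = measure M B)"

definition atomless :: "'a measure \<Rightarrow> bool" where
  "atomless M \<longleftrightarrow> (\<forall>A\<in>sets M. measure M A > 0 \<longrightarrow>
     (\<exists>B\<in>sets M. B \<subseteq> A \<and> 0 < measure M B \<and> measure M B < measure M A))"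

definition bfun :: "'a measure \<Rightarrow> (nat \<Rightarrow> 'a set set) \<Rightarrow> nat \<Rightarrow> 'a \<Rightarrow> real" where
  "bfun M A n x = infsum (\<lambda>w. measure M w * indicator w x) (A n)"

definition btilde :: "'a measure \<Rightarrow> (nat \<Rightarrow> 'a set set) \<Rightarrow> nat \<Rightarrow> 'a \<Rightarrow> real" where
  "btilde M A n x = infsum (\<lambda>\<omega>. indicator \<omega> x * (INF y\<in>\<omega>. bfun M A n y)) (A (n - 1))"

definition mdiff :: "'a measure \<Rightarrow> (nat \<Rightarrow> 'a measure) \<Rightarrow> ('a \<Rightarrow> real) \<Rightarrow> nat \<Rightarrow> 'a \<Rightarrow> real" where
  "mdiff M F G n x = real_cond_exp M (F n) G x - real_cond_exp M (F (n - 1)) G x"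

text \<open>The operators on a simple function G that is F_N-measurable
  (all terms with n > N vanish a.e., so the series is the finite sum up to N).\<close>
definition I_tilde :: "'a measure \<Rightarrow> (nat \<Rightarrow> 'a measure) \<Rightarrow> (nat \<Rightarrow> 'a set set) \<Rightarrow> real \<Rightarrow> nat
    \<Rightarrow> ('a \<Rightarrow> real) \<Rightarrow> 'a \<Rightarrow> real" where
  "I_tilde M F A \<alpha> N G x = (\<Sum>n\<in>{1..N}. btilde M A n x powr \<alpha> * mdiff M F G n x)"

definition I_A :: "'a measure \<Rightarrow> (nat \<Rightarrow> 'a measure) \<Rightarrow> (nat \<Rightarrow> 'a set set) \<Rightarrow> real \<Rightarrow> nat
    \<Rightarrow> ('a \<Rightarrow> real) \<Rightarrow> 'a \<Rightarrow> real" where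
  "I_A M F A \<alpha> N G x = (\<Sum>n\<in>{1..N}. bfun M A n x powr \<alpha> * mdiff M F G n x)"

text \<open>L_r norm of a real function (meaningful when |G|^r is integrable).\<close>
definition Lnorm :: "'a measure \<Rightarrow> real \<Rightarrow> ('a \<Rightarrow> real) \<Rightarrow> real" where
  "Lnorm M r G = (integral\<^sup>L M (\<lambda>x. \<bar>G x\<bar> powr r)) powr (1 / r)"

end

theory Submission
  imports Defs
begin

text \<open>
  Fix a point x and let \<omega>_0(x) \<supseteq> \<omega>_1(x) \<supseteq> ... be the atoms containing it, of measures b_n.
  At x the martingale differences are differences of averages of G over consecutive atoms, and both
  weights are at most b_n. Splitting the scales at a threshold t (Hedberg's trick), the atoms of
  measure below t contribute O(t^\<alpha> MG(x)), where MG is the martingale maximal function of |G|, and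
  the larger ones contribute O(t^(-1/q) ||G||_p) by Hoelder's inequality; both estimates telescope
  through a single potential in b_n. Optimising t gives |I G(x)| \<le> C MG(x)^(p/q) ||G||_p^(1-p/q),
  and Doob's maximal inequality ||MG||_p \<le> C ||G||_p turns this into the L_p-L_q bound.
\<close>

section \<open>Hedberg's chain estimate\<close>

lemma one_minus_powr_ge:
  fixes r e :: real
  assumes "0 < r" "0 \<le> e" "e \<le> 1"
  shows "e * (1 - r) \<le> 1 - r powr e"
  using Youngs_inequality_0[of e "1 - e" r 1] assms by (simp add: algebra_simps)

lemma powr_mult_one_minus_ratio_le:
  fixes a b b' :: real
  assumes "0 < a" "a \<le> 1" "0 < b" "b \<le> b'"
  shows "b powr a * (1 - b / b') \<le> (b' powr a - b powr a) / a"
proof -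
  define r where "r = b / b'"
  have r: "0 < r" "r \<le> 1" using assms by (auto simp: r_def)
  have b: "b = r * b'" using assms by (simp add: r_def)
  have "a * (r powr a * (1 - r)) \<le> a * (1 - r)"
    using r assms powr_le1[of a r] mult_right_mono[of "r powr a" 1 "1 - r"] by (intro mult_left_mono) auto
  also have "\<dots> \<le> 1 - r powr a" using one_minus_powr_ge[of r a] r assms by simp
  finally have "a * (r powr a * (1 - r)) * b' powr a \<le> (1 - r powr a) * b' powr a"
    by (intro mult_right_mono) auto
  then show ?thesis
    using assms r by (simp add: b powr_mult field_simps)
qed

lemma powr_neg_mult_one_minus_ratio_le:
  fixes c b b' :: real
  assumes "0 < c" "c \<le> 1" "0 < b" "b \<le> b'"
  shows "b powr (- c) * (1 - b / b') \<le> (b powr (- c) - b' powr (- c)) / c"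
proof -
  define r where "r = b / b'"
  have r: "0 < r" using assms by (simp add: r_def)
  have b': "b' powr (- c) = b powr (- c) * r powr c"
    using assms r by (simp add: r_def powr_divide powr_minus_divide field_simps)
  have "c * (1 - r) \<le> 1 - r powr c" using one_minus_powr_ge[of r c] r assms by simp
  then have "c * (1 - r) * b powr (- c) \<le> (1 - r powr c) * b powr (- c)"
    by (intro mult_right_mono) auto
  then show ?thesis
    using assms by (simp add: b' r_def field_simps)
qed

text \<open>
  Scales u \<ge> t are charged to Y by the first term, scales below t to X by the second, and the
  single crossing of t by the jump of the last one; see \<open>hedberg_potential_step\<close>.
\<close>

definition hedberg_potential :: "real \<Rightarrow> real \<Rightarrow> real \<Rightarrow> real \<Rightarrow> real \<Rightarrow> real \<Rightarrow> real" where
  "hedberg_potential \<alpha> \<gamma> t X Y u =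
     max u t powr (- \<gamma>) * Y / \<gamma> - min u t powr \<alpha> * X / \<alpha> + (if u < t then t powr \<alpha> * X else 0)"

lemma hedberg_potential_bounds:
  assumes "0 < \<alpha>" "0 < \<gamma>" "0 < t" "0 < u" "0 \<le> X" "0 \<le> Y"
  shows "hedberg_potential \<alpha> \<gamma> t X Y u \<le> t powr (- \<gamma>) * Y / \<gamma> + t powr \<alpha> * X"
    and "- (t powr \<alpha> * X / \<alpha>) \<le> hedberg_potential \<alpha> \<gamma> t X Y u"
proof -
  have "max u t powr (- \<gamma>) \<le> t powr (- \<gamma>)" "min u t powr \<alpha> \<le> t powr \<alpha>"
    using assms by (auto intro: powr_mono2 powr_mono2')
  then have "max u t powr (- \<gamma>) * Y / \<gamma> \<le> t powr (- \<gamma>) * Y / \<gamma>"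
    and "min u t powr \<alpha> * X / \<alpha> \<le> t powr \<alpha> * X / \<alpha>"
    using assms by (auto intro!: divide_right_mono mult_right_mono)
  moreover have "0 \<le> max u t powr (- \<gamma>) * Y / \<gamma>" "0 \<le> min u t powr \<alpha> * X / \<alpha>"
    using assms by auto
  moreover have "0 \<le> (if u < t then t powr \<alpha> * X else 0)" "(if u < t then t powr \<alpha> * X else 0) \<le> t powr \<alpha> * X"
    using assms by auto
  ultimately show "hedberg_potential \<alpha> \<gamma> t X Y u \<le> t powr (- \<gamma>) * Y / \<gamma> + t powr \<alpha> * X"
    and "- (t powr \<alpha> * X / \<alpha>) \<le> hedberg_potential \<alpha> \<gamma> t X Y u"
    unfolding hedberg_potential_def by (simp_all add: algebra_simps)
qed

lemma hedberg_potential_step: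
  assumes "0 < \<alpha>" "\<alpha> \<le> 1" "0 < \<gamma>" "\<gamma> \<le> 1" "0 < t" "0 \<le> X" "0 \<le> Y"
    and "0 < b" "b \<le> b'" "0 \<le> u" "u \<le> b powr \<alpha> * X" "u \<le> b powr (- \<gamma>) * Y"
  shows "u * (1 - b / b') \<le> hedberg_potential \<alpha> \<gamma> t X Y b - hedberg_potential \<alpha> \<gamma> t X Y b'"
proof -
  have ratio: "0 \<le> 1 - b / b'" "1 - b / b' \<le> 1" using assms by auto
  consider (large) "t \<le> b" | (crossing) "b < t" "t \<le> b'" | (small) "b' < t"
    by linarith
  then show ?thesis
  proof cases
    case large
    have "u * (1 - b / b') \<le> b powr (- \<gamma>) * Y * (1 - b / b')"
      using assms ratio by (intro mult_right_mono) auto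
    also have "\<dots> = b powr (- \<gamma>) * (1 - b / b') * Y" by simp
    also have "\<dots> \<le> (b powr (- \<gamma>) - b' powr (- \<gamma>)) / \<gamma> * Y"
      using powr_neg_mult_one_minus_ratio_le[of \<gamma> b b'] assms by (intro mult_right_mono) auto
    also have "\<dots> = hedberg_potential \<alpha> \<gamma> t X Y b - hedberg_potential \<alpha> \<gamma> t X Y b'"
      using large assms by (simp add: hedberg_potential_def max_absorb1 min_absorb2 field_simps)
    finally show ?thesis .
  next
    case crossing
    have powr_le: "b powr \<alpha> \<le> t powr \<alpha>" "b' powr (- \<gamma>) \<le> t powr (- \<gamma>)"
      using assms crossing by (auto intro: powr_mono2 powr_mono2')
    have "u * (1 - b / b') \<le> b powr \<alpha> * X"
      using assms ratio mult_mono[of u "b powr \<alpha> * X" "1 - b / b'" 1] by simp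
    also have "\<dots> \<le> t powr \<alpha> * X"
      using assms powr_le by (intro mult_right_mono) auto
    moreover have "0 \<le> (t powr (- \<gamma>) - b' powr (- \<gamma>)) * Y / \<gamma>" "0 \<le> (t powr \<alpha> - b powr \<alpha>) * X / \<alpha>"
      using assms powr_le by auto
    moreover have "hedberg_potential \<alpha> \<gamma> t X Y b - hedberg_potential \<alpha> \<gamma> t X Y b'
        = (t powr (- \<gamma>) - b' powr (- \<gamma>)) * Y / \<gamma> + (t powr \<alpha> - b powr \<alpha>) * X / \<alpha> + t powr \<alpha> * X"
      using crossing by (simp add: hedberg_potential_def max_absorb1 max_absorb2 min_absorb1 min_absorb2
          diff_divide_distrib left_diff_distrib)
    ultimately show ?thesis by linarith
  next
    case small
    have "u * (1 - b / b') \<le> b powr \<alpha> * X * (1 - b / b')"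
      using assms ratio by (intro mult_right_mono) auto
    also have "\<dots> = b powr \<alpha> * (1 - b / b') * X" by simp
    also have "\<dots> \<le> (b' powr \<alpha> - b powr \<alpha>) / \<alpha> * X"
      using powr_mult_one_minus_ratio_le[of \<alpha> b b'] assms by (intro mult_right_mono) auto
    also have "\<dots> = hedberg_potential \<alpha> \<gamma> t X Y b - hedberg_potential \<alpha> \<gamma> t X Y b'"
      using small assms by (simp add: hedberg_potential_def max_absorb2 min_absorb1 field_simps)
    finally show ?thesis .
  qed
qed

text \<open>
  Here b \<le> b' are the measures of nested atoms \<omega> \<subseteq> \<omega>', and g, \<mu> (resp. g', \<mu>') are the integrals
  of G and |G| over \<omega> (resp. \<omega>'). The last summand telescopes along a chain of atoms.
\<close>

lemma weighted_average_step_le: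
  fixes \<alpha> b b' g g' \<mu> \<mu>' :: real
  assumes "0 \<le> \<alpha>" "0 < b" "b \<le> b'" "\<bar>g\<bar> \<le> \<mu>" "\<bar>g' - g\<bar> \<le> \<mu>' - \<mu>"
  shows "b powr \<alpha> * \<bar>g / b - g' / b'\<bar>
           \<le> 2 * (b powr (\<alpha> - 1) * \<mu>) * (1 - b / b') + (b' powr (\<alpha> - 1) * \<mu>' - b powr (\<alpha> - 1) * \<mu>)"
proof -
  have b': "0 < b'" using assms by simp
  have \<mu>: "0 \<le> \<mu>" "0 \<le> \<mu>' - \<mu>" using assms by linarith+
  have pow: "b powr \<alpha> \<le> b' powr \<alpha>" using assms by (intro powr_mono2) auto
  have pow_pred: "b powr (\<alpha> - 1) = b powr \<alpha> / b" "b' powr (\<alpha> - 1) = b' powr \<alpha> / b'"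
    using assms b' by (simp_all add: powr_diff)
  have "g / b - g' / b' = g * (1 / b - 1 / b') - (g' - g) / b'"
    using assms b' by (simp add: field_simps)
  also have "\<bar>\<dots>\<bar> \<le> \<mu> * (1 / b - 1 / b') + (\<mu>' - \<mu>) / b'"
    using assms b' by (intro abs_triangle_ineq4[THEN order_trans] add_mono)
      (auto simp: abs_mult frac_le intro!: mult_mono divide_right_mono)
  finally have "b powr \<alpha> * \<bar>g / b - g' / b'\<bar> \<le> b powr \<alpha> * (\<mu> * (1 / b - 1 / b') + (\<mu>' - \<mu>) / b')"
    by (rule mult_left_mono) simp
  also have "\<dots> = b powr (\<alpha> - 1) * \<mu> * (1 - b / b') + b powr \<alpha> * (\<mu>' - \<mu>) / b'"
    using assms b' by (simp add: pow_pred field_simps)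
  also have "b powr \<alpha> * (\<mu>' - \<mu>) / b' \<le> b' powr (\<alpha> - 1) * (\<mu>' - \<mu>)"
    using pow \<mu> b' by (simp add: pow_pred divide_right_mono mult_right_mono)
  also have "b' powr (\<alpha> - 1) * (\<mu>' - \<mu>)
      = (b' powr (\<alpha> - 1) * \<mu>' - b powr (\<alpha> - 1) * \<mu>) + (b powr (\<alpha> - 1) - b' powr (\<alpha> - 1)) * \<mu>"
    by (simp add: algebra_simps)
  also have "(b powr (\<alpha> - 1) - b' powr (\<alpha> - 1)) * \<mu> \<le> b powr (\<alpha> - 1) * (1 - b / b') * \<mu>"
  proof -
    have "b powr \<alpha> / b' \<le> b' powr (\<alpha> - 1)" using pow b' by (simp add: pow_pred divide_right_mono)
    then have "b powr (\<alpha> - 1) - b' powr (\<alpha> - 1) \<le> b powr (\<alpha> - 1) * (1 - b / b')"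
      using assms by (simp add: pow_pred field_simps)
    then show ?thesis using \<mu>(1) by (rule mult_right_mono)
  qed
  finally show ?thesis by (simp add: algebra_simps)
qed

lemma powr_pred_mult_bounds:
  fixes \<alpha> \<gamma> b \<mu> X Y :: real
  assumes "0 < b" "0 \<le> \<mu>" "\<mu> \<le> b * X" "\<mu> \<le> b powr (1 - \<alpha> - \<gamma>) * Y"
  shows "0 \<le> b powr (\<alpha> - 1) * \<mu>" "b powr (\<alpha> - 1) * \<mu> \<le> b powr \<alpha> * X"
    and "b powr (\<alpha> - 1) * \<mu> \<le> b powr (- \<gamma>) * Y"
proof -
  have "b powr (\<alpha> - 1) * b = b powr \<alpha>" using assms(1) by (simp add: powr_diff)
  moreover have "b powr (\<alpha> - 1) * b powr (1 - \<alpha> - \<gamma>) = b powr (- \<gamma>)" by (simp flip: powr_add)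
  ultimately show "0 \<le> b powr (\<alpha> - 1) * \<mu>" "b powr (\<alpha> - 1) * \<mu> \<le> b powr \<alpha> * X"
    and "b powr (\<alpha> - 1) * \<mu> \<le> b powr (- \<gamma>) * Y"
    using assms(2) mult_left_mono[OF assms(3), of "b powr (\<alpha> - 1)"]
      mult_left_mono[OF assms(4), of "b powr (\<alpha> - 1)"]
    by (simp_all add: mult.assoc[symmetric])
qed

lemma hedberg_step_le:
  assumes \<alpha>: "0 < \<alpha>" "\<alpha> \<le> 1" and \<gamma>: "0 < \<gamma>" "\<gamma> \<le> 1" and t: "0 < t" and XY: "0 \<le> X" "0 \<le> Y"
    and b: "0 < b" "b \<le> b'" and g: "\<bar>g\<bar> \<le> \<mu>" "\<bar>g' - g\<bar> \<le> \<mu>' - \<mu>"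
    and \<mu>: "\<mu> \<le> b * X" "\<mu> \<le> b powr (1 - \<alpha> - \<gamma>) * Y"
  shows "b powr \<alpha> * \<bar>g / b - g' / b'\<bar>
           \<le> 2 * (hedberg_potential \<alpha> \<gamma> t X Y b - hedberg_potential \<alpha> \<gamma> t X Y b')
             + (b' powr (\<alpha> - 1) * \<mu>' - b powr (\<alpha> - 1) * \<mu>)"
proof -
  have "b powr \<alpha> * \<bar>g / b - g' / b'\<bar>
      \<le> 2 * (b powr (\<alpha> - 1) * \<mu> * (1 - b / b')) + (b' powr (\<alpha> - 1) * \<mu>' - b powr (\<alpha> - 1) * \<mu>)"
    using weighted_average_step_le[OF _ b g] \<alpha> by (simp add: mult.assoc)
  also have "b powr (\<alpha> - 1) * \<mu> * (1 - b / b') \<le> hedberg_potential \<alpha> \<gamma> t X Y b - hedberg_potential \<alpha> \<gamma> t X Y b'"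
  proof -
    have "0 \<le> \<mu>" using abs_ge_zero[of g] g(1) by linarith
    then show ?thesis using powr_pred_mult_bounds[OF b(1) _ \<mu>] by (intro hedberg_potential_step[OF \<alpha> \<gamma> t XY b]) auto
  qed
  finally show ?thesis by simp
qed

lemma hedberg_chain_bound:
  fixes b \<mu> g :: "nat \<Rightarrow> real"
  assumes \<alpha>: "0 < \<alpha>" "\<alpha> \<le> 1" and \<gamma>: "0 < \<gamma>" "\<gamma> \<le> 1"
    and t: "0 < t" and XY: "0 \<le> X" "0 \<le> Y"
    and b_pos: "\<And>k. k \<le> N \<Longrightarrow> 0 < b k" and b_dec: "\<And>n. n < N \<Longrightarrow> b (Suc n) \<le> b n"
    and g_le: "\<And>k. k \<le> N \<Longrightarrow> \<bar>g k\<bar> \<le> \<mu> k"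
    and g_diff: "\<And>n. n < N \<Longrightarrow> \<bar>g n - g (Suc n)\<bar> \<le> \<mu> n - \<mu> (Suc n)"
    and \<mu>_X: "\<And>k. k \<le> N \<Longrightarrow> \<mu> k \<le> b k * X"
    and \<mu>_Y: "\<And>k. k \<le> N \<Longrightarrow> \<mu> k \<le> b k powr (1 - \<alpha> - \<gamma>) * Y"
  shows "(\<Sum>n<N. b (Suc n) powr \<alpha> * \<bar>g (Suc n) / b (Suc n) - g n / b n\<bar>)
           \<le> (2 / \<alpha> + 3) * t powr \<alpha> * X + (2 / \<gamma> + 1) * t powr (- \<gamma>) * Y"
proof -
  define \<Lambda> where "\<Lambda> = hedberg_potential \<alpha> \<gamma> t X Y"
  define P where "P k = b k powr (\<alpha> - 1) * \<mu> k" for k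
  have P: "0 \<le> P k" "P k \<le> b k powr \<alpha> * X" "P k \<le> b k powr (- \<gamma>) * Y" if "k \<le> N" for k
  proof -
    have "0 \<le> \<mu> k" using abs_ge_zero[of "g k"] g_le[OF that] by linarith
    then show "0 \<le> P k" "P k \<le> b k powr \<alpha> * X" "P k \<le> b k powr (- \<gamma>) * Y"
      unfolding P_def using powr_pred_mult_bounds[OF b_pos[OF that] _ \<mu>_X[OF that] \<mu>_Y[OF that]] by auto
  qed
  have "(\<Sum>n<N. b (Suc n) powr \<alpha> * \<bar>g (Suc n) / b (Suc n) - g n / b n\<bar>)
      \<le> (\<Sum>n<N. 2 * (\<Lambda> (b (Suc n)) - \<Lambda> (b n)) + (P n - P (Suc n)))"
    unfolding \<Lambda>_def P_def
    by (intro sum_mono hedberg_step_le \<alpha> \<gamma> t XY b_pos b_dec g_le g_diff \<mu>_X \<mu>_Y) auto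
  also have "\<dots> = 2 * (\<Lambda> (b N) - \<Lambda> (b 0)) + (P 0 - P N)"
    by (simp add: sum.distrib sum_lessThan_telescope[of "\<lambda>k. 2 * \<Lambda> (b k)"] sum_lessThan_telescope')
  also have "\<dots> \<le> 2 * (t powr (- \<gamma>) * Y / \<gamma> + t powr \<alpha> * X + t powr \<alpha> * X / \<alpha>)
      + (t powr \<alpha> * X + t powr (- \<gamma>) * Y)"
  proof -
    have "\<Lambda> (b N) \<le> t powr (- \<gamma>) * Y / \<gamma> + t powr \<alpha> * X"
      unfolding \<Lambda>_def by (rule hedberg_potential_bounds(1)[OF \<alpha>(1) \<gamma>(1) t b_pos XY]) simp
    moreover have "- (t powr \<alpha> * X / \<alpha>) \<le> \<Lambda> (b 0)"
      unfolding \<Lambda>_def by (rule hedberg_potential_bounds(2)[OF \<alpha>(1) \<gamma>(1) t b_pos XY]) simp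
    moreover have "P 0 \<le> t powr \<alpha> * X + t powr (- \<gamma>) * Y"
    proof (cases "b 0 < t")
      case True
      then have "b 0 powr \<alpha> * X \<le> t powr \<alpha> * X"
        using \<alpha> XY b_pos[of 0] by (intro mult_right_mono powr_mono2) auto
      then show ?thesis using P(2)[of 0] XY by (simp add: add_increasing2)
    next
      case False
      then have "b 0 powr (- \<gamma>) * Y \<le> t powr (- \<gamma>) * Y"
        using \<gamma> XY t by (intro mult_right_mono powr_mono2') auto
      then show ?thesis using P(3)[of 0] XY by (simp add: add_increasing)
    qed
    ultimately show ?thesis using P(1)[OF order_refl] by argo
  qed
  also have "\<dots> = (2 / \<alpha> + 3) * t powr \<alpha> * X + (2 / \<gamma> + 1) * t powr (- \<gamma>) * Y"
    by (simp add: field_simps)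
  finally show ?thesis .
qed

lemma le_if_bounded_at_all_scales:
  fixes S A B X Y a c :: real
  assumes "0 < a" "0 < c" "0 \<le> A" "0 \<le> B" "0 \<le> X" "0 \<le> Y"
    and bound: "\<And>t. 0 < t \<Longrightarrow> S \<le> A * t powr a * X + B * t powr (- c) * Y"
  shows "S \<le> (A + B) * X powr (c / (a + c)) * Y powr (a / (a + c))"
proof -
  consider (pos) "0 < X" "0 < Y" | (X0) "X = 0" | (Y0) "Y = 0"
    using assms by linarith
  then show ?thesis
  proof cases
    case pos
    define t where "t = (Y / X) powr (1 / (a + c))"
    have t: "0 < t" using pos by (simp add: t_def)
    have "a / (a + c) + c / (a + c) = 1" using assms by (simp add: add_divide_distrib[symmetric])
    then have split: "Z powr (a / (a + c)) * Z powr (c / (a + c)) = Z" if "0 < Z" for Z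
      using that by (simp flip: powr_add)
    have "t powr a * X = Y powr (a / (a + c)) * (X / X powr (a / (a + c)))"
      using pos by (simp add: t_def powr_powr powr_divide)
    also have "X / X powr (a / (a + c)) = X powr (c / (a + c))"
      using split[OF pos(1)] pos by (simp add: field_simps)
    finally have ta: "t powr a * X = X powr (c / (a + c)) * Y powr (a / (a + c))" by simp
    have "t powr (- c) * Y = X powr (c / (a + c)) * (Y / Y powr (c / (a + c)))"
      using pos by (simp add: t_def powr_powr powr_divide powr_minus_divide)
    also have "Y / Y powr (c / (a + c)) = Y powr (a / (a + c))"
      using split[OF pos(2)] pos by (simp add: field_simps)
    finally have tc: "t powr (- c) * Y = X powr (c / (a + c)) * Y powr (a / (a + c))" .
    show ?thesis using bound[OF t] by (simp add: mult.assoc ta tc distrib_right)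
  next
    case X0
    have "((\<lambda>t. B * t powr (- c) * Y) \<longlongrightarrow> 0) at_top"
      using assms by (intro tendsto_mult_right_zero tendsto_mult_left_zero tendsto_neg_powr filterlim_ident) auto
    moreover have "\<forall>\<^sub>F t in at_top. S \<le> B * t powr (- c) * Y"
      using eventually_gt_at_top[of 0] by eventually_elim (use bound X0 in simp)
    ultimately have "S \<le> 0" by (intro tendsto_le[OF trivial_limit_at_top_linorder _ tendsto_const])
    then show ?thesis using X0 assms by simp
  next
    case Y0
    have "((\<lambda>t. A * t powr a * X) \<longlongrightarrow> 0) (at_right 0)"
      using assms by (intro tendsto_mult_right_zero tendsto_mult_left_zero tendsto_zero_powrI
          tendsto_ident_at tendsto_const eventually_at_rightI[of 0 1]) auto
    moreover have "\<forall>\<^sub>F t in at_right 0. S \<le> A * t powr a * X"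
      using eventually_at_right_less[of 0] by eventually_elim (use bound Y0 in simp)
    ultimately have "S \<le> 0" by (intro tendsto_le[OF trivial_limit_at_right_real _ tendsto_const])
    then show ?thesis using Y0 assms by simp
  qed
qed

section \<open>Hoelder and Doob inequalities\<close>

lemma integrable_if_integrable_abs_powr:
  fixes G :: "'a \<Rightarrow> real"
  assumes "finite_measure M" "G \<in> borel_measurable M" "1 \<le> p" "integrable M (\<lambda>x. \<bar>G x\<bar> powr p)"
  shows "integrable M G"
proof (rule Bochner_Integration.integrable_bound[where f = "\<lambda>x. 1 + \<bar>G x\<bar> powr p"])
  interpret finite_measure M by fact
  show "integrable M (\<lambda>x. 1 + \<bar>G x\<bar> powr p)" using assms(4) by simp
  have "\<bar>G x\<bar> \<le> 1 + \<bar>G x\<bar> powr p" for x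
  proof (cases "\<bar>G x\<bar> \<le> 1")
    case False
    then have "\<bar>G x\<bar> powr 1 \<le> \<bar>G x\<bar> powr p" using assms(3) by (intro powr_mono) auto
    then show ?thesis using False by simp
  qed (use powr_ge_zero[of "\<bar>G x\<bar>" p] in linarith)
  then show "AE x in M. norm (G x) \<le> norm (1 + \<bar>G x\<bar> powr p)" by (intro AE_I2) simp
qed (use assms in auto)

lemma Holder_inequality_nonneg:
  fixes f g :: "'a \<Rightarrow> real"
  assumes p: "1 < p" "1 / p + 1 / p' = 1"
    and [measurable]: "f \<in> borel_measurable M" "g \<in> borel_measurable M"
    and nonneg: "\<And>x. x \<in> space M \<Longrightarrow> 0 \<le> f x" "\<And>x. x \<in> space M \<Longrightarrow> 0 \<le> g x"
    and int: "integrable M (\<lambda>x. f x powr p)" "integrable M (\<lambda>x. g x powr p')"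
  shows "integrable M (\<lambda>x. f x * g x)"
    and "(\<integral>x. f x * g x \<partial>M) \<le> (\<integral>x. f x powr p \<partial>M) powr (1 / p) * (\<integral>x. g x powr p' \<partial>M) powr (1 / p')"
proof -
  have p': "1 < p'"
  proof -
    have "0 < 1 / p" "1 / p < 1" using p by auto
    then have "0 < 1 / p'" "1 / p' < 1" using p(2) by linarith+
    moreover from this have "0 < p'" by simp
    ultimately show ?thesis by (simp add: divide_less_eq)
  qed
  have Young: "f x * g x / (a * b) \<le> f x powr p / (p * a powr p) + g x powr p' / (p' * b powr p')"
    if "x \<in> space M" "0 < a" "0 < b" for x a b
    using Youngs_inequality[OF p(1) p' p(2), of "f x / a" "g x / b"] nonneg that
    by (simp add: powr_divide field_simps)
  show int_fg: "integrable M (\<lambda>x. f x * g x)"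
  proof (rule Bochner_Integration.integrable_bound[where f = "\<lambda>x. f x powr p / p + g x powr p' / p'"])
    show "AE x in M. norm (f x * g x) \<le> norm (f x powr p / p + g x powr p' / p')"
      using Young[of _ 1 1] nonneg by (intro AE_I2) (auto simp: abs_mult intro: order_trans[OF _ abs_ge_self])
  qed (use int in auto)
  define A where "A = (\<integral>x. f x powr p \<partial>M)"
  define B where "B = (\<integral>x. g x powr p' \<partial>M)"
  have A: "0 \<le> A" and B: "0 \<le> B" by (auto simp: A_def B_def)
  show "(\<integral>x. f x * g x \<partial>M) \<le> A powr (1 / p) * B powr (1 / p')"
  proof (cases "A = 0 \<or> B = 0")
    case True
    then have "(AE x in M. f x powr p = 0) \<or> (AE x in M. g x powr p' = 0)"
      using int by (auto simp: A_def B_def integral_nonneg_eq_0_iff_AE)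
    then have "AE x in M. f x * g x = 0" by (auto elim!: eventually_mono)
    then show ?thesis using A B by (simp add: integral_eq_zero_AE)
  next
    case False
    define a where "a = A powr (1 / p)"
    define b where "b = B powr (1 / p')"
    have ab: "0 < a" "a powr p = A" "0 < b" "b powr p' = B"
      using A B False p p' by (auto simp: a_def b_def powr_powr)
    have "(\<integral>x. f x * g x \<partial>M) / (a * b) = (\<integral>x. f x * g x / (a * b) \<partial>M)" by simp
    also have "\<dots> \<le> (\<integral>x. f x powr p / (p * A) + g x powr p' / (p' * B) \<partial>M)"
      using Young[OF _ ab(1,3)] int_fg int by (intro integral_mono) (auto simp: ab)
    also have "\<dots> = A / (p * A) + B / (p' * B)" using int by (simp add: A_def B_def)
    also have "\<dots> = 1" using False p by simp
    finally show ?thesis using ab by (simp add: a_def b_def field_simps)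
  qed
qed

lemma set_integral_abs_le_powr:
  fixes G :: "'a \<Rightarrow> real"
  assumes "finite_measure M" "1 < p" "G \<in> borel_measurable M" "integrable M (\<lambda>x. \<bar>G x\<bar> powr p)"
    and W: "W \<in> sets M"
  shows "(\<integral>x\<in>W. \<bar>G x\<bar> \<partial>M) \<le> measure M W powr (1 - 1 / p) * (\<integral>x\<in>W. \<bar>G x\<bar> powr p \<partial>M) powr (1 / p)"
proof -
  interpret finite_measure M by fact
  define p' where "p' = p / (p - 1)"
  have p': "1 / p + 1 / p' = 1" "0 < p'" "1 / p' = 1 - 1 / p" using assms by (auto simp: p'_def field_simps)
  have ind_powr: "indicator W x powr r = (indicator W x :: real)" if "0 < r" for x and r :: real
    using that by (simp add: indicator_def)
  have ind_sq: "indicator W x * indicator W x = (indicator W x :: real)" for x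
    by (simp add: indicator_def)
  have "emeasure M W < \<infinity>" using emeasure_finite[of W] by (metis infinity_ennreal_def top.not_eq_extremum)
  then have "integrable M (indicator W :: 'a \<Rightarrow> real)" using W by simp
  then have "(\<integral>x. (indicator W x * \<bar>G x\<bar>) * indicator W x \<partial>M)
      \<le> (\<integral>x. (indicator W x * \<bar>G x\<bar>) powr p \<partial>M) powr (1 / p) * (\<integral>x. indicator W x powr p' \<partial>M) powr (1 / p')"
    using assms p' integrable_mult_indicator[OF W assms(4)]
    by (intro Holder_inequality_nonneg) (auto simp: ind_powr powr_mult)
  moreover have "(\<integral>x. indicator W x powr p' \<partial>M) = measure M W" using p' W by (simp add: ind_powr)
  ultimately show ?thesis
    using assms p' by (simp add: set_lebesgue_integral_def powr_mult ind_powr mult_ac ind_sq)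
qed

lemma set_integral_abs_le_Lnorm:
  fixes G :: "'a \<Rightarrow> real"
  assumes "finite_measure M" "1 < p" "G \<in> borel_measurable M" "integrable M (\<lambda>x. \<bar>G x\<bar> powr p)"
    and W: "W \<in> sets M"
  shows "(\<integral>x\<in>W. \<bar>G x\<bar> \<partial>M) \<le> measure M W powr (1 - 1 / p) * Lnorm M p G"
proof -
  have "(\<integral>x\<in>W. \<bar>G x\<bar> powr p \<partial>M) \<le> (\<integral>x. \<bar>G x\<bar> powr p \<partial>M)"
    unfolding set_lebesgue_integral_def using assms integrable_mult_indicator[OF W assms(4)]
    by (intro integral_mono) (auto simp: indicator_def)
  then have "(\<integral>x\<in>W. \<bar>G x\<bar> powr p \<partial>M) powr (1 / p) \<le> Lnorm M p G"
    unfolding Lnorm_def using assms W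
    by (intro powr_mono2) (auto simp: set_lebesgue_integral_def intro!: integral_nonneg_AE)
  then have "measure M W powr (1 - 1 / p) * (\<integral>x\<in>W. \<bar>G x\<bar> powr p \<partial>M) powr (1 / p)
      \<le> measure M W powr (1 - 1 / p) * Lnorm M p G"
    by (rule mult_left_mono) simp
  with set_integral_abs_le_powr[OF assms] show ?thesis by (rule order_trans)
qed

lemma average_abs_powr_le:
  fixes G :: "'a \<Rightarrow> real"
  assumes "finite_measure M" "1 < p" "G \<in> borel_measurable M" "integrable M (\<lambda>x. \<bar>G x\<bar> powr p)"
    and W: "W \<in> sets M" "0 < measure M W"
  shows "((\<integral>x\<in>W. \<bar>G x\<bar> \<partial>M) / measure M W) powr p \<le> (\<integral>x\<in>W. \<bar>G x\<bar> powr p \<partial>M) / measure M W"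
proof -
  define P where "P = measure M W"
  define J where "J = (\<integral>x\<in>W. \<bar>G x\<bar> powr p \<partial>M)"
  have J: "0 \<le> J"
    unfolding J_def set_lebesgue_integral_def by (intro integral_nonneg_AE) auto
  have I: "0 \<le> (\<integral>x\<in>W. \<bar>G x\<bar> \<partial>M)"
    unfolding set_lebesgue_integral_def by (intro integral_nonneg_AE) auto
  have "((\<integral>x\<in>W. \<bar>G x\<bar> \<partial>M) / P) powr p \<le> (P powr (1 - 1 / p) * J powr (1 / p) / P) powr p"
    using set_integral_abs_le_powr[OF assms(1-4) W(1)] I W(2) assms(2)
    by (intro powr_mono2 divide_right_mono) (auto simp: P_def J_def)
  also have "P powr (1 - 1 / p) * J powr (1 / p) / P = P powr (- 1 / p) * J powr (1 / p)"
    using W(2) by (simp add: P_def powr_diff powr_minus_divide)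
  also have "(P powr (- 1 / p) * J powr (1 / p)) powr p = J / P"
    using W(2) J assms(2) by (simp add: P_def powr_mult powr_powr powr_minus_divide powr_divide)
  finally show ?thesis by (simp add: P_def J_def)
qed

lemma abs_set_integral_diff_le:
  fixes G :: "'a \<Rightarrow> real"
  assumes "integrable M G" "W \<in> sets M" "W' \<in> sets M" "W \<subseteq> W'"
  shows "\<bar>(\<integral>x\<in>W'. G x \<partial>M) - (\<integral>x\<in>W. G x \<partial>M)\<bar> \<le> (\<integral>x\<in>W'. \<bar>G x\<bar> \<partial>M) - (\<integral>x\<in>W. \<bar>G x\<bar> \<partial>M)"
proof -
  have diff: "(\<integral>x\<in>W'. f x \<partial>M) - (\<integral>x\<in>W. f x \<partial>M) = (\<integral>x. indicator (W' - W) x * f x \<partial>M)"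
    if "integrable M f" for f :: "'a \<Rightarrow> real"
  proof -
    have "indicator W' x = indicator W x + (indicator (W' - W) x :: real)" for x
      using assms(4) by (auto simp: indicator_def)
    then show ?thesis
      using integrable_mult_indicator[OF _ that] assms
      by (simp add: set_lebesgue_integral_def distrib_right Bochner_Integration.integral_add)
  qed
  have "\<bar>\<integral>x. indicator (W' - W) x * G x \<partial>M\<bar> \<le> (\<integral>x. indicator (W' - W) x * \<bar>G x\<bar> \<partial>M)"
    using integral_abs_bound[of M "\<lambda>x. indicator (W' - W) x * G x"] by (simp add: abs_mult)
  then show ?thesis using diff[OF assms(1)] diff[of "\<lambda>x. \<bar>G x\<bar>"] assms(1) by simp
qed

lemma Young_powr_pred:
  fixes a c p :: real
  assumes "1 < p" "0 \<le> a" "0 \<le> c"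
  shows "a powr (p - 1) * c \<le> (p - 1) / p * a powr p + c powr p / p"
proof -
  define p' where "p' = p / (p - 1)"
  have p': "1 < p'" "1 / p' + 1 / p = 1" using assms by (auto simp: p'_def field_simps)
  have "a powr (p - 1) * c \<le> (a powr (p - 1)) powr p' / p' + c powr p / p"
    using Youngs_inequality[OF p'(1) assms(1) p'(2)] assms by simp
  also have "(a powr (p - 1)) powr p' = a powr p"
    using assms by (simp add: powr_powr p'_def)
  finally show ?thesis by (simp add: p'_def mult.commute)
qed

lemma Young_powr_pred_eps:
  fixes a b p e :: real
  assumes "1 < p" "0 \<le> a" "0 \<le> b" "0 < e"
  shows "a powr (p - 1) * b \<le> e * a powr p + e powr (1 - p) * b powr p"
proof -
  have pred: "x powr (p - 1) * x = x powr p" if "0 \<le> x" for x :: real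
    using that powr_mult_base[of x "p - 1"] by (cases "x = 0") (auto simp: mult.commute)
  show ?thesis
  proof (cases "b \<le> e * a")
    case True
    have "a powr (p - 1) * b \<le> e * (a powr (p - 1) * a)"
      using True assms mult_left_mono[OF True, of "a powr (p - 1)"] by (simp add: mult_ac)
    then show ?thesis using assms pred[of a] by (simp add: add_increasing2)
  next
    case False
    then have "a powr (p - 1) \<le> (b / e) powr (p - 1)"
      using assms by (intro powr_mono2) (auto simp: field_simps)
    then have "a powr (p - 1) * b \<le> (b / e) powr (p - 1) * b"
      using assms by (intro mult_right_mono) auto
    also have "\<dots> = e powr (1 - p) * (b powr (p - 1) * b)"
      using assms by (simp add: powr_divide powr_diff divide_simps)
    finally show ?thesis using assms pred[of b] by (simp add: add_increasing)
  qed
qed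

text \<open>
  For a nonnegative martingale the sum on the right has zero expectation, which leaves
  Doob's L_p inequality.
\<close>

lemma pathwise_Doob_inequality:
  fixes x :: "nat \<Rightarrow> real" and p :: real
  assumes p: "1 < p" and nonneg: "\<And>k. 0 \<le> x k"
  shows "Max (x ` {..N}) powr p \<le> p / (p - 1) * (Max (x ` {..N}) powr (p - 1) * x N
           - (\<Sum>n<N. Max (x ` {..n}) powr (p - 1) * (x (Suc n) - x n)))"
proof -
  define m where "m n = Max (x ` {..n})" for n
  define S where "S N = m N powr (p - 1) * x N - (\<Sum>n<N. m n powr (p - 1) * (x (Suc n) - x n))" for N
  have pred: "a powr (p - 1) * a = a powr p" if "0 \<le> a" for a :: real
    using that powr_mult_base[of a "p - 1"] by (cases "a = 0") (auto simp: mult.commute)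
  have m_Suc: "m (Suc n) = max (x (Suc n)) (m n)" for n
    by (simp add: m_def atMost_Suc)
  have m_nonneg: "0 \<le> m n" for n
    using nonneg[of 0] by (auto simp: m_def Max_ge_iff intro!: bexI[where x = 0])
  have "(p - 1) / p * m N powr p \<le> S N"
  proof (induction N)
    case 0
    have "(p - 1) / p * m 0 powr p \<le> m 0 powr p" using p by (intro mult_left_le_one_le) auto
    then show ?case using pred[of "x 0"] nonneg[of 0] by (simp add: S_def m_def)
  next
    case (Suc N)
    have S_Suc: "S (Suc N) = S N + (m (Suc N) powr (p - 1) - m N powr (p - 1)) * x (Suc N)"
      by (simp add: S_def algebra_simps)
    show ?case
    proof (cases "x (Suc N) \<le> m N")
      case True
      then show ?thesis using Suc S_Suc m_Suc by (simp add: max_absorb2)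
    next
      case False
      define a c where "a = m N" and "c = x (Suc N)"
      have ac: "0 \<le> a" "a \<le> c" "0 \<le> c" "m (Suc N) = c"
        using False m_Suc m_nonneg nonneg by (auto simp: a_def c_def)
      have "(p - 1) / p * (c powr p - a powr p) \<le> (c powr (p - 1) - a powr (p - 1)) * c"
        using Young_powr_pred[OF p ac(1) ac(3)] pred[OF ac(3)] p by (simp add: field_simps)
      then show ?thesis
        using Suc S_Suc ac by (simp add: a_def c_def right_diff_distrib)
    qed
  qed
  then show ?thesis using p by (simp add: S_def m_def field_simps)
qed

lemma integrable_Max_powr:
  fixes X :: "nat \<Rightarrow> 'a \<Rightarrow> real"
  assumes [measurable]: "\<And>k. X k \<in> borel_measurable M" and int: "\<And>k. integrable M (\<lambda>x. X k x powr p)"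
  shows "integrable M (\<lambda>x. Max ((\<lambda>k. X k x) ` {..n}) powr p)"
proof (rule Bochner_Integration.integrable_bound[where f = "\<lambda>x. \<Sum>k\<le>n. X k x powr p"])
  show "AE x in M. norm (Max ((\<lambda>k. X k x) ` {..n}) powr p) \<le> norm (\<Sum>k\<le>n. X k x powr p)"
  proof (intro AE_I2)
    fix x
    have "Max ((\<lambda>k. X k x) ` {..n}) \<in> (\<lambda>k. X k x) ` {..n}" by (rule Max_in) auto
    then obtain j where "j \<in> {..n}" "Max ((\<lambda>k. X k x) ` {..n}) = X j x" by blast
    then show "norm (Max ((\<lambda>k. X k x) ` {..n}) powr p) \<le> norm (\<Sum>k\<le>n. X k x powr p)"
      using member_le_sum[of j "{..n}" "\<lambda>k. X k x powr p"] by simp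
  qed
qed (use int in auto)

lemma integrable_powr_pred_mult:
  fixes f g :: "'a \<Rightarrow> real"
  assumes p: "1 < p" and [measurable]: "f \<in> borel_measurable M" "g \<in> borel_measurable M"
    and nonneg: "\<And>x. x \<in> space M \<Longrightarrow> 0 \<le> f x" "\<And>x. x \<in> space M \<Longrightarrow> 0 \<le> g x"
    and int: "integrable M (\<lambda>x. f x powr p)" "integrable M (\<lambda>x. g x powr p)"
  shows "integrable M (\<lambda>x. f x powr (p - 1) * g x)"
proof (rule Bochner_Integration.integrable_bound[where f = "\<lambda>x. f x powr p + g x powr p"])
  show "AE x in M. norm (f x powr (p - 1) * g x) \<le> norm (f x powr p + g x powr p)"
    using Young_powr_pred_eps[OF p nonneg zero_less_one] nonneg by (intro AE_I2) simp
qed (use int in auto)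

lemma integral_mult_eq_if_cond_exp_eq:
  fixes h X Y :: "'a \<Rightarrow> real"
  assumes "finite_measure M" "subalgebra M F"
    and [measurable]: "h \<in> borel_measurable F" "X \<in> borel_measurable M" "Y \<in> borel_measurable M"
    and int: "integrable M (\<lambda>x. h x * Y x)" and cond_exp: "AE x in M. real_cond_exp M F Y x = X x"
  shows "(\<integral>x. h x * Y x \<partial>M) = (\<integral>x. h x * X x \<partial>M)"
proof -
  interpret finite_measure M by fact
  interpret finite_measure_subalgebra M F by unfold_locales (rule assms(2))
  have [measurable]: "h \<in> borel_measurable M" using measurable_from_subalg[OF assms(2,3)] .
  have "(\<integral>x. h x * Y x \<partial>M) = (\<integral>x. h x * real_cond_exp M F Y x \<partial>M)"
    by (rule real_cond_exp_intg(2)[OF int, symmetric]) measurable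
  also have "\<dots> = (\<integral>x. h x * X x \<partial>M)"
    using cond_exp by (intro integral_cong_AE) (auto elim!: eventually_mono)
  finally show ?thesis .
qed

lemma Doob_maximal_inequality:
  fixes X :: "nat \<Rightarrow> 'a \<Rightarrow> real" and F :: "nat \<Rightarrow> 'a measure"
  assumes "finite_measure M" and sub: "\<And>k. subalgebra M (F k)" and p: "1 < p"
    and adapted: "\<And>j k. j \<le> k \<Longrightarrow> X j \<in> borel_measurable (F k)"
    and nonneg: "\<And>k x. x \<in> space M \<Longrightarrow> 0 \<le> X k x"
    and int: "\<And>k. integrable M (\<lambda>x. X k x powr p)"
    and martingale: "\<And>k. AE x in M. real_cond_exp M (F k) (X (Suc k)) x = X k x"
  shows "integrable M (\<lambda>x. Max ((\<lambda>k. X k x) ` {..N}) powr p)"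
    and "(\<integral>x. Max ((\<lambda>k. X k x) ` {..N}) powr p \<partial>M) \<le> (2 * p / (p - 1)) powr p * (\<integral>x. X N x powr p \<partial>M)"
proof -
  interpret finite_measure M by fact
  define m where "m n x = Max ((\<lambda>k. X k x) ` {..n})" for n x
  have X_meas[measurable]: "X k \<in> borel_measurable M" for k
    using measurable_from_subalg[OF sub adapted[OF order_refl]] .
  have m_meas_F: "m n \<in> borel_measurable (F n)" for n
    unfolding m_def by (intro borel_measurable_Max adapted) auto
  have m_meas[measurable]: "m n \<in> borel_measurable M" for n
    using measurable_from_subalg[OF sub m_meas_F] .
  have m_nonneg: "0 \<le> m n x" if "x \<in> space M" for n x
    using nonneg[OF that, of 0] by (auto simp: m_def Max_ge_iff intro!: bexI[where x = 0])
  have m_int: "integrable M (\<lambda>x. m n x powr p)" for n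
    unfolding m_def by (rule integrable_Max_powr[OF X_meas int])
  have prod_int: "integrable M (\<lambda>x. m n x powr (p - 1) * X j x)" for n j
    by (rule integrable_powr_pred_mult[OF p m_meas X_meas m_nonneg nonneg m_int int])
  have martingale_int: "(\<integral>x. m n x powr (p - 1) * X (Suc n) x \<partial>M) = (\<integral>x. m n x powr (p - 1) * X n x \<partial>M)"
    for n
  proof (rule integral_mult_eq_if_cond_exp_eq[OF assms(1) sub _ X_meas X_meas prod_int martingale])
    show "(\<lambda>x. m n x powr (p - 1)) \<in> borel_measurable (F n)" using m_meas_F[of n] by measurable
  qed
  define q where "q = p / (p - 1)"
  define R where "R x = q * (m N x powr (p - 1) * X N x
      - (\<Sum>n<N. m n x powr (p - 1) * X (Suc n) x - m n x powr (p - 1) * X n x))" for x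
  have pathwise: "m N x powr p \<le> R x" if "x \<in> space M" for x
    using pathwise_Doob_inequality[OF p, of "\<lambda>k. X k x" N] nonneg[OF that]
    by (simp add: R_def m_def q_def right_diff_distrib)
  have R_int: "integrable M R" unfolding R_def using prod_int by auto
  have "(\<integral>x. R x \<partial>M) = q * (\<integral>x. m N x powr (p - 1) * X N x \<partial>M)"
    unfolding R_def using prod_int martingale_int
    by (simp add: Bochner_Integration.integral_diff Bochner_Integration.integral_sum)
  define e where "e = 1 / (2 * q)"
  have qe: "0 < e" "q * e = 1 / 2" "2 * q * e powr (1 - p) = (2 * q) powr p"
    using p by (auto simp: e_def q_def powr_divide powr_diff field_simps)
  define I where "I = (\<integral>x. m N x powr p \<partial>M)"
  define J where "J = (\<integral>x. X N x powr p \<partial>M)"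
  have "I \<le> (\<integral>x. R x \<partial>M)" unfolding I_def using pathwise m_int R_int by (intro integral_mono) auto
  also have "\<dots> \<le> q * (\<integral>x. e * m N x powr p + e powr (1 - p) * X N x powr p \<partial>M)"
    unfolding \<open>(\<integral>x. R x \<partial>M) = _\<close> using prod_int m_int int p
    by (intro mult_left_mono integral_mono Young_powr_pred_eps[OF p m_nonneg nonneg qe(1)])
      (auto simp: q_def)
  also have "\<dots> = q * e * I + q * e powr (1 - p) * J"
    using m_int int by (simp add: I_def J_def algebra_simps)
  finally have "I \<le> I / 2 + q * e powr (1 - p) * J" using qe(2) by simp
  then have "I \<le> 2 * q * e powr (1 - p) * J" by linarith
  then have "I \<le> (2 * q) powr p * J" using qe(3) by simp
  moreover have "2 * q = 2 * p / (p - 1)" by (simp add: q_def)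
  ultimately show "(\<integral>x. Max ((\<lambda>k. X k x) ` {..N}) powr p \<partial>M) \<le> (2 * p / (p - 1)) powr p * (\<integral>x. X N x powr p \<partial>M)"
    by (simp only: I_def J_def m_def)
  show "integrable M (\<lambda>x. Max ((\<lambda>k. X k x) ` {..N}) powr p)"
    using m_int[of N] by (simp add: m_def)
qed

section \<open>Atomic filtrations\<close>

locale atomic_filtration =
  fixes M :: "'a measure" and F :: "nat \<Rightarrow> 'a measure" and A :: "nat \<Rightarrow> 'a set set"
  assumes prob: "prob_space M"
    and sub: "\<And>n. subalgebra M (F n)"
    and mono: "\<And>n m. n \<le> m \<Longrightarrow> sets (F n) \<subseteq> sets (F m)"
    and countable_atoms: "\<And>n. countable (A n)"
    and disjoint_atoms: "\<And>n. disjoint (A n)"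
    and cover: "\<And>n. \<Union>(A n) = space M"
    and atom: "\<And>n w. w \<in> A n \<Longrightarrow> is_atom M (F n) w"
    and generated: "\<And>n. sets (F n) = sigma_sets (space M) (A n)"
begin

sublocale prob_space M by (rule prob)

lemma space_F: "space (F n) = space M"
  using sub[of n] by (simp add: subalgebra_def)

lemma subalgebra_F: "k \<le> n \<Longrightarrow> subalgebra (F n) (F k)"
  unfolding subalgebra_def using mono space_F by auto

lemma atom_sets_F: "w \<in> A n \<Longrightarrow> w \<in> sets (F n)"
  using atom[of w n] by (simp add: is_atom_def)

lemma atom_sets: "w \<in> A n \<Longrightarrow> w \<in> sets M"
  using atom_sets_F sub[of n] by (auto simp: subalgebra_def)

lemma atom_measure_pos: "w \<in> A n \<Longrightarrow> 0 < measure M w"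
  using atom[of w n] by (simp add: is_atom_def)

lemma atom_subset_space: "w \<in> A n \<Longrightarrow> w \<subseteq> space M"
  using cover[of n] by blast

lemma atom_subset_or_disjoint:
  assumes "S \<in> sets (F n)" "w \<in> A n"
  shows "w \<subseteq> S \<or> w \<inter> S = {}"
proof -
  have "S \<in> sigma_sets (space M) (A n)" using assms(1) generated by simp
  then show ?thesis
  proof induction
    case (Basic a)
    then show ?case using disjoint_atoms[of n] assms(2) unfolding disjoint_def by blast
  next
    case Empty
    then show ?case by simp
  next
    case (Compl a)
    then show ?case using atom_subset_space[OF assms(2)] by blast
  next
    case (Union a)
    then show ?case by blast
  qed
qed

lemma ex1_atom:
  assumes "x \<in> space M"
  shows "\<exists>!w. w \<in> A n \<and> x \<in> w"
proof -
  obtain w where w: "w \<in> A n" "x \<in> w" using cover[of n] assms by blast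
  moreover have "w' = w" if "w' \<in> A n" "x \<in> w'" for w'
    using disjoint_atoms[of n] w that unfolding disjoint_def by blast
  ultimately show ?thesis by blast
qed

definition atom_of :: "nat \<Rightarrow> 'a \<Rightarrow> 'a set" where
  "atom_of n x = (THE w. w \<in> A n \<and> x \<in> w)"

lemma atom_of: assumes "x \<in> space M" shows "atom_of n x \<in> A n" "x \<in> atom_of n x"
  using theI'[OF ex1_atom[OF assms, of n]] by (auto simp: atom_of_def)

lemma atom_of_eq: "w \<in> A n \<Longrightarrow> x \<in> w \<Longrightarrow> atom_of n x = w"
  unfolding atom_of_def by (rule the1_equality[OF ex1_atom]) (use atom_subset_space in auto)

lemma atom_of_sets: "x \<in> space M \<Longrightarrow> atom_of n x \<in> sets M"
  using atom_of(1) atom_sets by blast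

lemma atom_of_measure_pos: "x \<in> space M \<Longrightarrow> 0 < measure M (atom_of n x)"
  using atom_of(1) atom_measure_pos by blast

lemma atom_of_antimono:
  assumes "x \<in> space M" "n \<le> k"
  shows "atom_of k x \<subseteq> atom_of n x"
proof -
  have "atom_of n x \<in> sets (F k)" using atom_sets_F[OF atom_of(1)[OF assms(1)]] mono[OF assms(2)] by blast
  then show ?thesis
    using atom_subset_or_disjoint[OF _ atom_of(1)[OF assms(1)]] atom_of(2)[OF assms(1)] by blast
qed

lemma measurable_F_constant_on_atom:
  assumes f: "f \<in> borel_measurable (F n)" and x: "x \<in> space M" and y: "y \<in> atom_of n x"
  shows "f y = (f x :: real)"
proof -
  have "f -` {f x} \<inter> space (F n) \<in> sets (F n)" using f by (intro measurable_sets) auto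
  then have "atom_of n x \<subseteq> f -` {f x} \<inter> space (F n) \<or> atom_of n x \<inter> (f -` {f x} \<inter> space (F n)) = {}"
    by (rule atom_subset_or_disjoint[OF _ atom_of(1)[OF x]])
  then show ?thesis using atom_of[OF x] x y space_F by blast
qed

lemma measurable_F_if_factors_through_atom:
  assumes "\<And>x. x \<in> space M \<Longrightarrow> f x = g (atom_of n x)"
  shows "(f :: 'a \<Rightarrow> real) \<in> borel_measurable (F n)"
proof (rule measurableI)
  fix B :: "real set"
  have "f -` B \<inter> space (F n) = \<Union>{w \<in> A n. g w \<in> B}"
  proof (intro equalityI subsetI)
    fix y assume y: "y \<in> f -` B \<inter> space (F n)"
    then have "y \<in> space M" using space_F by simp
    then show "y \<in> \<Union>{w \<in> A n. g w \<in> B}" using y assms atom_of[of y n] by auto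
  next
    fix y assume "y \<in> \<Union>{w \<in> A n. g w \<in> B}"
    then obtain w where w: "w \<in> A n" "g w \<in> B" "y \<in> w" by blast
    then have "y \<in> space M" using atom_subset_space by blast
    then show "y \<in> f -` B \<inter> space (F n)" using assms atom_of_eq[OF w(1,3)] w space_F by auto
  qed
  then show "f -` B \<inter> space (F n) \<in> sets (F n)"
    using countable_atoms[of n] atom_sets_F by (auto intro!: sets.countable_Union)
qed auto

lemma cond_exp_eq_average:
  assumes f: "integrable M f" and x: "x \<in> space M"
  shows "real_cond_exp M (F n) f x = (\<integral>y\<in>atom_of n x. f y \<partial>M) / measure M (atom_of n x)"
proof -
  interpret finite_measure_subalgebra M "F n" by unfold_locales (rule sub)
  have "(\<integral>y\<in>atom_of n x. f y \<partial>M) = (\<integral>y\<in>atom_of n x. real_cond_exp M (F n) f y \<partial>M)"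
    using atom_sets_F[OF atom_of(1)[OF x]] by (rule real_cond_exp_intA[OF f])
  also have "\<dots> = (\<integral>y\<in>atom_of n x. real_cond_exp M (F n) f x \<partial>M)"
    using measurable_F_constant_on_atom[OF borel_measurable_cond_exp x]
    by (intro set_lebesgue_integral_cong) (auto simp: atom_of_sets[OF x])
  also have "\<dots> = real_cond_exp M (F n) f x * measure M (atom_of n x)"
    using atom_of_sets[OF x] by (simp add: set_lebesgue_integral_def)
  finally show ?thesis using atom_of_measure_pos[OF x, of n] by simp
qed

lemma bfun_eq:
  assumes x: "x \<in> space M"
  shows "bfun M A n x = measure M (atom_of n x)"
proof -
  have "bfun M A n x = infsum (\<lambda>w. measure M w * indicator w x) {atom_of n x}"
    unfolding bfun_def
    by (rule infsum_cong_neutral) (use atom_of[OF x] atom_of_eq in \<open>auto simp: indicator_def\<close>)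
  then show ?thesis using atom_of[OF x] by simp
qed

lemma btilde_eq:
  assumes x: "x \<in> space M"
  shows "btilde M A n x = (INF y\<in>atom_of (n - 1) x. bfun M A n y)"
proof -
  have "btilde M A n x = infsum (\<lambda>w. indicator w x * (INF y\<in>w. bfun M A n y)) {atom_of (n - 1) x}"
    unfolding btilde_def
    by (rule infsum_cong_neutral) (use atom_of[OF x] atom_of_eq in \<open>auto simp: indicator_def\<close>)
  then show ?thesis using atom_of[OF x] by simp
qed

lemma btilde_bounds:
  assumes x: "x \<in> space M"
  shows "0 \<le> btilde M A n x" "btilde M A n x \<le> measure M (atom_of n x)"
proof -
  have nonneg: "0 \<le> bfun M A n y" if "y \<in> atom_of (n - 1) x" for y
  proof -
    have "y \<in> space M" using atom_subset_space[OF atom_of(1)[OF x]] that by blast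
    then show ?thesis by (simp add: bfun_eq)
  qed
  then show "0 \<le> btilde M A n x"
    unfolding btilde_eq[OF x] using atom_of(2)[OF x] by (intro cINF_greatest) auto
  have "(INF y\<in>atom_of (n - 1) x. bfun M A n y) \<le> bfun M A n x"
    using nonneg atom_of(2)[OF x] by (intro cINF_lower bdd_belowI2[where m = 0]) auto
  then show "btilde M A n x \<le> measure M (atom_of n x)" using bfun_eq[OF x] btilde_eq[OF x] by simp
qed

lemma bfun_measurable: "bfun M A n \<in> borel_measurable M"
  using measurable_F_if_factors_through_atom[of "bfun M A n" "measure M", OF bfun_eq]
  by (rule measurable_from_subalg[OF sub])

lemma btilde_measurable: "btilde M A n \<in> borel_measurable M"
  using measurable_F_if_factors_through_atom[where g = "\<lambda>w. INF y\<in>w. bfun M A n y", OF btilde_eq]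
  by (rule measurable_from_subalg[OF sub])

section \<open>Bounds for the fractional sums\<close>

definition maximal_function :: "nat \<Rightarrow> ('a \<Rightarrow> real) \<Rightarrow> 'a \<Rightarrow> real" where
  "maximal_function N G x = Max ((\<lambda>k. real_cond_exp M (F k) (\<lambda>y. \<bar>G y\<bar>) x) ` {..N})"

lemma cond_exp_abs_nonneg:
  assumes "integrable M G" "x \<in> space M"
  shows "0 \<le> real_cond_exp M (F n) (\<lambda>y. \<bar>G y\<bar>) x"
  unfolding cond_exp_eq_average[OF integrable_abs[OF assms(1)] assms(2)] set_lebesgue_integral_def
  by (auto intro!: integral_nonneg_AE divide_nonneg_nonneg)

lemma maximal_function_nonneg:
  assumes "integrable M G" "x \<in> space M"
  shows "0 \<le> maximal_function N G x"
proof -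
  have "real_cond_exp M (F 0) (\<lambda>y. \<bar>G y\<bar>) x \<le> maximal_function N G x"
    unfolding maximal_function_def by (rule Max_ge) auto
  then show ?thesis using cond_exp_abs_nonneg[OF assms, of 0] by linarith
qed

lemma cond_exp_abs_powr_integrable:
  fixes G :: "'a \<Rightarrow> real"
  assumes p: "1 < p" and G_meas: "G \<in> borel_measurable M" and G_int: "integrable M (\<lambda>x. \<bar>G x\<bar> powr p)"
  shows "integrable M (\<lambda>x. real_cond_exp M (F k) (\<lambda>y. \<bar>G y\<bar>) x powr p)"
proof -
  interpret finite_measure_subalgebra M "F k" by unfold_locales (rule sub)
  have abs_G_int: "integrable M (\<lambda>x. \<bar>G x\<bar>)"
    using integrable_if_integrable_abs_powr[OF finite_measure_axioms G_meas _ G_int] p by simp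
  have Jensen: "real_cond_exp M (F k) (\<lambda>y. \<bar>G y\<bar>) x powr p \<le> real_cond_exp M (F k) (\<lambda>y. \<bar>G y\<bar> powr p) x"
    if x: "x \<in> space M" for x
    unfolding cond_exp_eq_average[OF abs_G_int x] cond_exp_eq_average[OF G_int x]
    by (rule average_abs_powr_le[OF finite_measure_axioms p G_meas G_int atom_of_sets[OF x] atom_of_measure_pos[OF x]])
  show ?thesis
    by (rule Bochner_Integration.integrable_bound[OF real_cond_exp_int(1)[OF G_int]])
      (use Jensen in \<open>auto intro!: AE_I2 intro: order_trans[OF _ abs_ge_self]\<close>)
qed

lemma maximal_function_Lp:
  fixes G :: "'a \<Rightarrow> real"
  assumes p: "1 < p" and G_meas: "G \<in> borel_measurable (F N)" and G_int: "integrable M (\<lambda>x. \<bar>G x\<bar> powr p)"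
  shows "integrable M (\<lambda>x. maximal_function N G x powr p)"
    and "(\<integral>x. maximal_function N G x powr p \<partial>M) \<le> (2 * p / (p - 1)) powr p * (\<integral>x. \<bar>G x\<bar> powr p \<partial>M)"
proof -
  define X where "X k = real_cond_exp M (F k) (\<lambda>y. \<bar>G y\<bar>)" for k
  have G_M[measurable]: "G \<in> borel_measurable M" using measurable_from_subalg[OF sub G_meas] .
  have G_int1: "integrable M G"
    using integrable_if_integrable_abs_powr[OF finite_measure_axioms G_M _ G_int] p by simp
  then have abs_G_int: "integrable M (\<lambda>x. \<bar>G x\<bar>)" by simp
  have nonneg: "0 \<le> X k x" if "x \<in> space M" for k x
    unfolding X_def using cond_exp_abs_nonneg[OF G_int1 that] .
  have X_powr_int: "integrable M (\<lambda>x. X k x powr p)" for k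
    unfolding X_def by (rule cond_exp_abs_powr_integrable[OF p G_M G_int])
  have adapted: "X j \<in> borel_measurable (F k)" if "j \<le> k" for j k
    unfolding X_def using measurable_from_subalg[OF subalgebra_F[OF that] borel_measurable_cond_exp] .
  have martingale: "AE x in M. real_cond_exp M (F k) (X (Suc k)) x = X k x" for k
  proof -
    interpret finite_measure_subalgebra M "F k" by unfold_locales (rule sub)
    show ?thesis
      unfolding X_def using abs_G_int by (intro real_cond_exp_nested_subalg sub subalgebra_F) auto
  qed
  note Doob = Doob_maximal_inequality[where X = X and N = N, OF finite_measure_axioms sub p adapted nonneg X_powr_int martingale]
  have "AE x in M. X N x = \<bar>G x\<bar>"
  proof -
    interpret finite_measure_subalgebra M "F N" by unfold_locales (rule sub)
    have "(\<lambda>y. \<bar>G y\<bar>) \<in> borel_measurable (F N)" using G_meas by measurable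
    then show ?thesis unfolding X_def by (rule real_cond_exp_F_meas[OF abs_G_int])
  qed
  then have "(\<integral>x. X N x powr p \<partial>M) = (\<integral>x. \<bar>G x\<bar> powr p \<partial>M)"
    by (intro integral_cong_AE) (auto elim!: eventually_mono simp: X_def)
  then show "integrable M (\<lambda>x. maximal_function N G x powr p)"
    and "(\<integral>x. maximal_function N G x powr p \<partial>M) \<le> (2 * p / (p - 1)) powr p * (\<integral>x. \<bar>G x\<bar> powr p \<partial>M)"
    using Doob by (simp_all add: maximal_function_def X_def)
qed

lemma atom_chain_bound:
  fixes G :: "'a \<Rightarrow> real"
  assumes \<alpha>: "0 < \<alpha>" "\<alpha> < 1" and pq: "1 < p" "p < q" "1 / p - 1 / q = \<alpha>"
    and G_meas: "G \<in> borel_measurable M" and G_int: "integrable M (\<lambda>x. \<bar>G x\<bar> powr p)"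
    and x: "x \<in> space M" and t: "0 < t"
  shows "(\<Sum>n\<in>{1..N}. measure M (atom_of n x) powr \<alpha> * \<bar>mdiff M F G n x\<bar>)
           \<le> (2 / \<alpha> + 3) * t powr \<alpha> * maximal_function N G x + (2 * q + 1) * t powr (- (1 / q)) * Lnorm M p G"
proof -
  define b where "b k = measure M (atom_of k x)" for k
  define \<mu> where "\<mu> k = (\<integral>y\<in>atom_of k x. \<bar>G y\<bar> \<partial>M)" for k
  define g where "g k = (\<integral>y\<in>atom_of k x. G y \<partial>M)" for k
  have G_int1: "integrable M G"
    using integrable_if_integrable_abs_powr[OF finite_measure_axioms G_meas _ G_int] pq by simp
  have b_pos: "0 < b k" for k using atom_of_measure_pos[OF x] by (simp add: b_def)
  have b_dec: "b (Suc n) \<le> b n" for n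
    using atom_of_antimono[OF x, of n "Suc n"] atom_of_sets[OF x] by (simp add: b_def finite_measure_mono)
  have g_le: "\<bar>g k\<bar> \<le> \<mu> k" for k
    using integral_abs_bound[of M "\<lambda>y. indicator (atom_of k x) y * G y"]
    by (simp add: g_def \<mu>_def set_lebesgue_integral_def abs_mult)
  have g_diff: "\<bar>g n - g (Suc n)\<bar> \<le> \<mu> n - \<mu> (Suc n)" for n
    unfolding g_def \<mu>_def using atom_of_antimono[OF x, of n "Suc n"]
    by (intro abs_set_integral_diff_le G_int1 atom_of_sets x) auto
  have average: "real_cond_exp M (F k) G x = g k / b k" "real_cond_exp M (F k) (\<lambda>y. \<bar>G y\<bar>) x = \<mu> k / b k" for k
    using cond_exp_eq_average[OF G_int1 x] cond_exp_eq_average[OF integrable_abs[OF G_int1] x]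
    by (simp_all add: g_def \<mu>_def b_def)
  have \<mu>_max: "\<mu> k \<le> b k * maximal_function N G x" if "k \<le> N" for k
  proof -
    have "\<mu> k / b k \<le> maximal_function N G x"
      unfolding maximal_function_def average(2)[symmetric] using that by (intro Max_ge) auto
    then show ?thesis using b_pos[of k] by (simp add: field_simps)
  qed
  have \<mu>_Lnorm: "\<mu> k \<le> b k powr (1 - \<alpha> - 1 / q) * Lnorm M p G" for k
    using set_integral_abs_le_Lnorm[OF finite_measure_axioms pq(1) G_meas G_int atom_of_sets[OF x]] pq(3)
    by (simp add: \<mu>_def b_def algebra_simps)
  have "(\<Sum>n\<in>{1..N}. measure M (atom_of n x) powr \<alpha> * \<bar>mdiff M F G n x\<bar>)
      = (\<Sum>n<N. b (Suc n) powr \<alpha> * \<bar>g (Suc n) / b (Suc n) - g n / b n\<bar>)"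
    by (simp add: mdiff_def average b_def sum.atLeast1_atMost_eq)
  also have "\<dots> \<le> (2 / \<alpha> + 3) * t powr \<alpha> * maximal_function N G x + (2 / (1 / q) + 1) * t powr (- (1 / q)) * Lnorm M p G"
    by (rule hedberg_chain_bound[where b = b and g = g and \<mu> = \<mu>])
      (use \<alpha> pq t maximal_function_nonneg[OF G_int1 x] b_pos b_dec g_le g_diff \<mu>_max \<mu>_Lnorm
        in \<open>auto simp: Lnorm_def\<close>)
  finally show ?thesis by simp
qed

lemma fractional_sum_pointwise_bound:
  fixes G :: "'a \<Rightarrow> real" and w :: "nat \<Rightarrow> 'a \<Rightarrow> real"
  assumes \<alpha>: "0 < \<alpha>" "\<alpha> < 1" and pq: "1 < p" "p < q" "1 / p - 1 / q = \<alpha>"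
    and G_meas: "G \<in> borel_measurable M" and G_int: "integrable M (\<lambda>x. \<bar>G x\<bar> powr p)"
    and x: "x \<in> space M"
    and w: "\<And>n. 1 \<le> n \<Longrightarrow> 0 \<le> w n x \<and> w n x \<le> measure M (atom_of n x)"
  shows "\<bar>\<Sum>n\<in>{1..N}. w n x powr \<alpha> * mdiff M F G n x\<bar>
           \<le> (2 / \<alpha> + 2 * q + 4) * maximal_function N G x powr (p / q) * Lnorm M p G powr (1 - p / q)"
proof -
  have G_int1: "integrable M G"
    using integrable_if_integrable_abs_powr[OF finite_measure_axioms G_meas _ G_int] pq by simp
  have "\<bar>\<Sum>n\<in>{1..N}. w n x powr \<alpha> * mdiff M F G n x\<bar>
      \<le> (\<Sum>n\<in>{1..N}. measure M (atom_of n x) powr \<alpha> * \<bar>mdiff M F G n x\<bar>)"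
  proof (rule order_trans[OF sum_abs sum_mono])
    fix n assume "n \<in> {1..N}"
    then have "w n x powr \<alpha> \<le> measure M (atom_of n x) powr \<alpha>" using w[of n] \<alpha> by (auto intro: powr_mono2)
    then show "\<bar>w n x powr \<alpha> * mdiff M F G n x\<bar> \<le> measure M (atom_of n x) powr \<alpha> * \<bar>mdiff M F G n x\<bar>"
      by (simp add: abs_mult mult_right_mono)
  qed
  moreover have "(\<Sum>n\<in>{1..N}. measure M (atom_of n x) powr \<alpha> * \<bar>mdiff M F G n x\<bar>)
      \<le> (2 / \<alpha> + 3 + (2 * q + 1)) * maximal_function N G x powr ((1 / q) / (\<alpha> + 1 / q))
        * Lnorm M p G powr (\<alpha> / (\<alpha> + 1 / q))"
    by (rule le_if_bounded_at_all_scales)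
      (use atom_chain_bound[OF \<alpha> pq G_meas G_int x] \<alpha> pq maximal_function_nonneg[OF G_int1 x]
        in \<open>auto simp: Lnorm_def\<close>)
  moreover have "(1 / q) / (\<alpha> + 1 / q) = p / q" "\<alpha> / (\<alpha> + 1 / q) = 1 - p / q"
    using pq by (auto simp: field_simps simp flip: pq(3))
  ultimately show ?thesis by (simp add: algebra_simps)
qed

lemma fractional_sum_Lq_bound:
  fixes G :: "'a \<Rightarrow> real" and w :: "nat \<Rightarrow> 'a \<Rightarrow> real"
  assumes \<alpha>: "0 < \<alpha>" "\<alpha> < 1" and pq: "1 < p" "p < q" "1 / p - 1 / q = \<alpha>"
    and G_meas: "G \<in> borel_measurable (F N)" and G_int: "integrable M (\<lambda>x. \<bar>G x\<bar> powr p)"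
    and w_meas: "\<And>n. w n \<in> borel_measurable M"
    and w: "\<And>n x. x \<in> space M \<Longrightarrow> 1 \<le> n \<Longrightarrow> 0 \<le> w n x \<and> w n x \<le> measure M (atom_of n x)"
  defines "I \<equiv> \<lambda>x. \<Sum>n\<in>{1..N}. w n x powr \<alpha> * mdiff M F G n x"
  shows "integrable M (\<lambda>x. \<bar>I x\<bar> powr q)"
    and "Lnorm M q I \<le> (2 / \<alpha> + 2 * q + 4) * ((2 * p / (p - 1)) powr p) powr (1 / q) * Lnorm M p G"
proof -
  define K where "K = 2 / \<alpha> + 2 * q + 4"
  define D where "D = (2 * p / (p - 1)) powr p"
  define nG where "nG = Lnorm M p G"
  have K: "0 \<le> K" using \<alpha> pq by (simp add: K_def)
  have nG: "0 \<le> nG" by (simp add: nG_def Lnorm_def)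
  have G_M[measurable]: "G \<in> borel_measurable M" using measurable_from_subalg[OF sub G_meas] .
  have [measurable]: "w n \<in> borel_measurable M" for n by (rule w_meas)
  have I_meas[measurable]: "I \<in> borel_measurable M" unfolding I_def mdiff_def by measurable
  have G_int1: "integrable M G"
    using integrable_if_integrable_abs_powr[OF finite_measure_axioms G_M _ G_int] pq by simp
  have G_powr_integral: "(\<integral>x. \<bar>G x\<bar> powr p \<partial>M) = nG powr p"
    using pq by (simp add: nG_def Lnorm_def powr_powr)
  note maximal = maximal_function_Lp[OF pq(1) G_meas G_int, unfolded G_powr_integral, folded D_def]
  note max_nonneg = maximal_function_nonneg[OF G_int1, of _ N]
  have pointwise: "\<bar>I x\<bar> powr q \<le> K powr q * nG powr (q - p) * maximal_function N G x powr p"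
    if x: "x \<in> space M" for x
  proof -
    have "\<bar>I x\<bar> powr q \<le> (K * maximal_function N G x powr (p / q) * nG powr (1 - p / q)) powr q"
      using fractional_sum_pointwise_bound[OF \<alpha> pq G_M G_int x, of w N] w[OF x] pq
      by (intro powr_mono2) (auto simp: I_def K_def nG_def)
    also have "\<dots> = K powr q * nG powr (q - p) * maximal_function N G x powr p"
      using K nG max_nonneg[OF x] pq by (simp add: powr_mult powr_powr algebra_simps)
    finally show ?thesis .
  qed
  show I_int: "integrable M (\<lambda>x. \<bar>I x\<bar> powr q)"
    by (rule Bochner_Integration.integrable_bound[OF integrable_mult_right[OF maximal(1)]])
      (use pointwise in \<open>auto intro!: AE_I2 intro: order_trans[OF _ abs_ge_self]\<close>)
  have "(\<integral>x. \<bar>I x\<bar> powr q \<partial>M) \<le> (\<integral>x. K powr q * nG powr (q - p) * maximal_function N G x powr p \<partial>M)"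
    using pointwise I_int maximal(1) by (intro integral_mono) auto
  also have "\<dots> \<le> K powr q * nG powr (q - p) * (D * nG powr p)"
    using maximal(2) by (simp add: mult_left_mono)
  also have "\<dots> = K powr q * D * nG powr q"
    by (simp add: mult_ac flip: powr_add)
  finally have "Lnorm M q I \<le> (K powr q * D * nG powr q) powr (1 / q)"
    unfolding Lnorm_def using pq by (intro powr_mono2) auto
  also have "\<dots> = K * D powr (1 / q) * nG"
    using K nG pq by (simp add: D_def powr_mult powr_powr)
  finally show "Lnorm M q I \<le> (2 / \<alpha> + 2 * q + 4) * ((2 * p / (p - 1)) powr p) powr (1 / q) * Lnorm M p G"
    by (simp add: K_def D_def nG_def)
qed

end

theorem theorem1:
  fixes M :: "'a measure" and F :: "nat \<Rightarrow> 'a measure" and A :: "nat \<Rightarrow> 'a set set"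
    and \<alpha> p q :: real
  assumes "prob_space M"
    and "atomless M"
    and "\<And>n. subalgebra M (F n)"
    and "\<And>n m. n \<le> m \<Longrightarrow> sets (F n) \<subseteq> sets (F m)"
    and "\<And>n. countable (A n)"
    and "\<And>n. disjoint (A n)"
    and "\<And>n. \<Union>(A n) = space M"
    and "\<And>n w. w \<in> A n \<Longrightarrow> is_atom M (F n) w"
    and "\<And>n. sets (F n) = sigma_sets (space M) (A n)"
    and "sets M = sigma_sets (space M) (\<Union>n. sets (F n))"
    and "0 < \<alpha>" and "\<alpha> < 1" and "1 < p" and "p < q" and "1 / p - 1 / q = \<alpha>"
  shows "\<exists>C. \<forall>N G. G \<in> borel_measurable (F N) \<and> integrable M (\<lambda>x. \<bar>G x\<bar> powr p) \<longrightarrow>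
           integrable M (\<lambda>x. \<bar>I_tilde M F A \<alpha> N G x\<bar> powr q) \<and>
           Lnorm M q (I_tilde M F A \<alpha> N G) \<le> C * Lnorm M p G \<and>
           integrable M (\<lambda>x. \<bar>I_A M F A \<alpha> N G x\<bar> powr q) \<and>
           Lnorm M q (I_A M F A \<alpha> N G) \<le> C * Lnorm M p G"
proof -
  interpret atomic_filtration M F A
    by (rule atomic_filtration.intro[OF assms(1,3-9)])
  define C where "C = (2 / \<alpha> + 2 * q + 4) * ((2 * p / (p - 1)) powr p) powr (1 / q)"
  have I_eqs: "I_tilde M F A \<alpha> N G = (\<lambda>x. \<Sum>n\<in>{1..N}. btilde M A n x powr \<alpha> * mdiff M F G n x)"
    "I_A M F A \<alpha> N G = (\<lambda>x. \<Sum>n\<in>{1..N}. bfun M A n x powr \<alpha> * mdiff M F G n x)" for N G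
    by (simp_all add: fun_eq_iff I_tilde_def I_A_def)
  show ?thesis
  proof (intro exI[of _ C] allI impI)
    fix N G assume G: "G \<in> borel_measurable (F N) \<and> integrable M (\<lambda>x. \<bar>G x\<bar> powr p)"
    note bound = fractional_sum_Lq_bound[OF assms(11-15) G[THEN conjunct1] G[THEN conjunct2], folded C_def]
    show "integrable M (\<lambda>x. \<bar>I_tilde M F A \<alpha> N G x\<bar> powr q) \<and> Lnorm M q (I_tilde M F A \<alpha> N G) \<le> C * Lnorm M p G \<and>
        integrable M (\<lambda>x. \<bar>I_A M F A \<alpha> N G x\<bar> powr q) \<and> Lnorm M q (I_A M F A \<alpha> N G) \<le> C * Lnorm M p G"
      unfolding I_eqs
      using bound[OF btilde_measurable] bound[OF bfun_measurable] by (simp add: btilde_bounds bfun_eq)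
  qed
qed

end
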